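(* Let $D$ be a tangle diagram with topmost region $0$. For each segment $i$ set \[ \mathcal{F}(w_i)=s^+_{i^{\uparrow}}\,x_i^+\,(x_i^-)^{-1}\,(s^+_{i^{\uparrow}})^{-1}, \] an automorphism of the object $0$ in $\Pi(D)$, where $w_i$ is the Wirtinger generator associated with $i$. Then $\mathcal{F}$ is a well-defined group homomorphism (functor) from the Wirtinger group $\pi(D)$ to the automorphism group of the object $0$ in $\Pi(D)$.
   Context: Tangle diagrams: $D$ is an oriented tangle diagram in $[0,1]^2$, viewed as a 4-valent graph. Segments are the edges of the graph; a strand is cut at each crossing, over or under. Regions are the components of the complement of the graph in the square. The topmost region $0$ is the region containing the top side of the square. Arcs are the maximal chains of segments joined at crossings where they pass over. Above and below: for a segment $i$, $i^{\uparrow}$ is the region on the left of $i$ with respect to its orientation and $i^{\downarrow}$ the one on its right. Crossing labels: rotate a crossing so both strands point right. The incoming segments are $1$ (upper left) and $2$ (lower left). The outgoing segments are $1'$ (lower right, continuing $1$) and $2'$ (upper right, continuing $2$). The crossing is positive if strand $1\to1'$ is over, negative if strand $2\to2'$ is over. Wirtinger group $\pi(D)$: one generator per arc, with $w_i$ the generator of the arc containing segment $i$. The relations are $w_{2'}=w_1^{-1}w_2w_1$ at each positive crossing and $w_{1'}=w_2w_1w_2^{-1}$ at each negative crossing. Fundamental groupoid $\Pi(D)$: objects are regions. There are generators $x_i^+,x_i^-:i^{\uparrow}\to i^{\downarrow}$ for each segment $i$ (paths passing over, respectively under, the segment). Composition is written left to right ($fg$ means $f$ then $g$). At each crossing the relations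 are $x_1^+x_2^+=x_{2'}^+x_{1'}^+$ and $x_1^-x_2^-=x_{2'}^-x_{1'}^-$, together with $x_1^-x_2^+=x_{2'}^+x_{1'}^-$ (positive crossing) or $x_1^+x_2^-=x_{2'}^-x_{1'}^+$ (negative crossing). Over paths: for a region $j$, choose a sequence of adjacent regions from $0$ to $j$ crossing segments $i_1,\dots,i_k$, and set $s_j^+=(x_{i_1}^+)^{\epsilon_1}\cdots(x_{i_k}^+)^{\epsilon_k}$. Here $\epsilon_t=+1$ if segment $i_t$ is crossed from $i_t^{\uparrow}$ to $i_t^{\downarrow}$ and $-1$ otherwise. This morphism $0\to j$ is independent of the chosen sequence. *)

theory Defs
  imports "HOL-Algebra.Group"
begin

text \<open>A letter is a generator together with a direction (True = the generator
itself, False = its formal inverse).  Composition is written left to right: the word u @ v means u then v.\<close>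

type_synonym 'g word = "('g \<times> bool) list"

fun is_path :: "('g \<Rightarrow> 'o) \<Rightarrow> ('g \<Rightarrow> 'o) \<Rightarrow> 'g set \<Rightarrow> 'o \<Rightarrow> 'g word \<Rightarrow> 'o \<Rightarrow> bool" where
  "is_path s t G a [] b = (a = b)"
| "is_path s t G a ((g, d) # w) b =
     (g \<in> G \<and> (if d then s g = a \<and> is_path s t G (t g) w b
                   else t g = a \<and> is_path s t G (s g) w b))"

definition inv_word :: "'g word \<Rightarrow> 'g word" where
  "inv_word w = rev (map (\<lambda>(g, d). (g, \<not> d)) w)"

inductive path_eq ::
  "('g \<Rightarrow> 'o) \<Rightarrow> ('g \<Rightarrow> 'o) \<Rightarrow> 'g set \<Rightarrow> ('g word \<times> 'g word) set
     \<Rightarrow> 'o \<Rightarrow> 'o \<Rightarrow> 'g word \<Rightarrow> 'g word \<Rightarrow> bool"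
  for s t G rels where
  pe_refl: "is_path s t G a w b \<Longrightarrow> path_eq s t G rels a b w w"
| pe_sym: "path_eq s t G rels a b u v \<Longrightarrow> path_eq s t G rels a b v u"
| pe_trans: "path_eq s t G rels a b u v \<Longrightarrow> path_eq s t G rels a b v w
             \<Longrightarrow> path_eq s t G rels a b u w"
| pe_cancel: "is_path s t G a (u @ [(g, d), (g, \<not> d)] @ v) b \<Longrightarrow>
             path_eq s t G rels a b (u @ [(g, d), (g, \<not> d)] @ v) (u @ v)"
| pe_rel: "(l, r) \<in> rels \<Longrightarrow> is_path s t G a (u @ l @ v) b \<Longrightarrow>
           is_path s t G a (u @ r @ v) b \<Longrightarrow>
           path_eq s t G rels a b (u @ l @ v) (u @ r @ v)"

definition path_rel ::
  "('g \<Rightarrow> 'o) \<Rightarrow> ('g \<Rightarrow> 'o) \<Rightarrow> 'g set \<Rightarrow> ('g word \<times> 'g word) set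
     \<Rightarrow> 'o \<Rightarrow> 'o \<Rightarrow> ('g word \<times> 'g word) set" where
  "path_rel s t G rels a b = {(u, v). path_eq s t G rels a b u v}"

definition vertex_group ::
  "('g \<Rightarrow> 'o) \<Rightarrow> ('g \<Rightarrow> 'o) \<Rightarrow> 'g set \<Rightarrow> ('g word \<times> 'g word) set
     \<Rightarrow> 'o \<Rightarrow> 'g word set monoid" where
  "vertex_group s t G rels a =
     \<lparr>carrier = {w. is_path s t G a w a} // path_rel s t G rels a a,
      mult = (\<lambda>X Y. path_rel s t G rels a a `` {(SOME x. x \<in> X) @ (SOME y. y \<in> Y)}),
      one = path_rel s t G rels a a `` {[]}\<rparr>"

text \<open>Segments 's, regions 'r, crossings 'c.  above i = i-up (region to the left
of i), below i = i-down (region to the right of i).  At a crossing c (rotated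
so both strands point right): in1 = 1 (upper left), in2 = 2 (lower left),
out1 = 1' (lower right, continuing 1), out2 = 2' (upper right, continuing 2);
positive c iff strand 1 -> 1' passes over.\<close>

record ('s, 'r, 'c) tangle_diagram =
  segs :: "'s set"
  regs :: "'r set"
  top_region :: 'r
  above :: "'s \<Rightarrow> 'r"
  below :: "'s \<Rightarrow> 'r"
  crossings :: "'c set"
  positive :: "'c \<Rightarrow> bool"
  in1 :: "'c \<Rightarrow> 's"
  in2 :: "'c \<Rightarrow> 's"
  out1 :: "'c \<Rightarrow> 's"
  out2 :: "'c \<Rightarrow> 's"

definition wf_diagram :: "('s, 'r, 'c) tangle_diagram \<Rightarrow> bool" where
  "wf_diagram D \<longleftrightarrow>
     finite (segs D) \<and> finite (regs D) \<and> finite (crossings D) \<and>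
     top_region D \<in> regs D \<and>
     (\<forall>i \<in> segs D. above D i \<in> regs D \<and> below D i \<in> regs D) \<and>
     (\<forall>c \<in> crossings D.
        in1 D c \<in> segs D \<and> in2 D c \<in> segs D \<and> out1 D c \<in> segs D \<and> out2 D c \<in> segs D \<and>
        above D (in1 D c) = above D (out2 D c) \<and>
        below D (in1 D c) = above D (in2 D c) \<and>
        below D (in2 D c) = below D (out1 D c) \<and>
        above D (out1 D c) = below D (out2 D c))"

definition over_joins :: "('s, 'r, 'c) tangle_diagram \<Rightarrow> ('s \<times> 's) set" where
  "over_joins D =
     {(in1 D c, out1 D c) | c. c \<in> crossings D \<and> positive D c} \<union>
     {(in2 D c, out2 D c) | c. c \<in> crossings D \<and> \<not> positive D c}"

definition arc_rel :: "('s, 'r, 'c) tangle_diagram \<Rightarrow> ('s \<times> 's) set" where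
  "arc_rel D = (Id_on (segs D) \<union> over_joins D \<union> (over_joins D)\<inverse>)\<^sup>*"

definition arc_of :: "('s, 'r, 'c) tangle_diagram \<Rightarrow> 's \<Rightarrow> 's set" where
  "arc_of D i = arc_rel D `` {i}"

definition arcs :: "('s, 'r, 'c) tangle_diagram \<Rightarrow> 's set set" where
  "arcs D = segs D // arc_rel D"

definition wirt_rels :: "('s, 'r, 'c) tangle_diagram \<Rightarrow> ('s set word \<times> 's set word) set" where
  "wirt_rels D =
     {([(arc_of D (out2 D c), True)],
       [(arc_of D (in1 D c), False), (arc_of D (in2 D c), True), (arc_of D (in1 D c), True)])
      | c. c \<in> crossings D \<and> positive D c} \<union>
     {([(arc_of D (out1 D c), True)],
       [(arc_of D (in2 D c), True), (arc_of D (in1 D c), True), (arc_of D (in2 D c), False)])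
      | c. c \<in> crossings D \<and> \<not> positive D c}"

definition wirtinger_group :: "('s, 'r, 'c) tangle_diagram \<Rightarrow> 's set word set monoid" where
  "wirtinger_group D = vertex_group (\<lambda>_. ()) (\<lambda>_. ()) (arcs D) (wirt_rels D) ()"

definition wirt_gen :: "('s, 'r, 'c) tangle_diagram \<Rightarrow> 's \<Rightarrow> 's set word set" where
  "wirt_gen D i = path_rel (\<lambda>_. ()) (\<lambda>_. ()) (arcs D) (wirt_rels D) () () `` {[(arc_of D i, True)]}"

text \<open>Generators (i, True) = x_i^+ (over) and (i, False) = x_i^- (under),
both from above i to below i.\<close>

abbreviation Pi_src :: "('s, 'r, 'c) tangle_diagram \<Rightarrow> 's \<times> bool \<Rightarrow> 'r" where
  "Pi_src D g \<equiv> above D (fst g)"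

abbreviation Pi_tgt :: "('s, 'r, 'c) tangle_diagram \<Rightarrow> 's \<times> bool \<Rightarrow> 'r" where
  "Pi_tgt D g \<equiv> below D (fst g)"

definition Pi_gens :: "('s, 'r, 'c) tangle_diagram \<Rightarrow> ('s \<times> bool) set" where
  "Pi_gens D = segs D \<times> UNIV"

definition Pi_rels :: "('s, 'r, 'c) tangle_diagram \<Rightarrow> (('s \<times> bool) word \<times> ('s \<times> bool) word) set" where
  "Pi_rels D =
     (\<Union>c \<in> crossings D.
       {([((in1 D c, True), True), ((in2 D c, True), True)],
         [((out2 D c, True), True), ((out1 D c, True), True)]),
        ([((in1 D c, False), True), ((in2 D c, False), True)],
         [((out2 D c, False), True), ((out1 D c, False), True)]),
        (if positive D c then
          ([((in1 D c, False), True), ((in2 D c, True), True)],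
           [((out2 D c, True), True), ((out1 D c, False), True)])
         else
          ([((in1 D c, True), True), ((in2 D c, False), True)],
           [((out2 D c, False), True), ((out1 D c, True), True)]))})"

abbreviation Pi_eq :: "('s, 'r, 'c) tangle_diagram \<Rightarrow> 'r \<Rightarrow> 'r \<Rightarrow> ('s \<times> bool) word \<Rightarrow> ('s \<times> bool) word \<Rightarrow> bool" where
  "Pi_eq D \<equiv> path_eq (Pi_src D) (Pi_tgt D) (Pi_gens D) (Pi_rels D)"

definition Aut_top :: "('s, 'r, 'c) tangle_diagram \<Rightarrow> ('s \<times> bool) word set monoid" where
  "Aut_top D = vertex_group (Pi_src D) (Pi_tgt D) (Pi_gens D) (Pi_rels D) (top_region D)"

text \<open>Over paths: a sequence of adjacent regions from the top region to j
crossing segments i_1..i_k gives the word of letters (x_{i_t}^+)^{eps_t};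
these are exactly the paths top -> j using only over generators.\<close>
definition over_words :: "('s, 'r, 'c) tangle_diagram \<Rightarrow> 'r \<Rightarrow> ('s \<times> bool) word set" where
  "over_words D j =
     {w. is_path (Pi_src D) (Pi_tgt D) (Pi_gens D) (top_region D) w j \<and>
         (\<forall>((i, ov), d) \<in> set w. ov)}"

definition s_plus :: "('s, 'r, 'c) tangle_diagram \<Rightarrow> 'r \<Rightarrow> ('s \<times> bool) word" where
  "s_plus D j = (SOME w. w \<in> over_words D j)"

definition F_word :: "('s, 'r, 'c) tangle_diagram \<Rightarrow> 's \<Rightarrow> ('s \<times> bool) word" where
  "F_word D i = s_plus D (above D i) @ [((i, True), True), ((i, False), False)]
                 @ inv_word (s_plus D (above D i))"

definition F_val :: "('s, 'r, 'c) tangle_diagram \<Rightarrow> 's \<Rightarrow> ('s \<times> bool) word set" where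
  "F_val D i = path_rel (Pi_src D) (Pi_tgt D) (Pi_gens D) (Pi_rels D) (top_region D) (top_region D)
                 `` {F_word D i}"

end

theory Submission
  imports Defs
begin

(* The assignment A \<mapsto> F(w_i), for an arc A containing the segment i, is extended to words;
   a substitution that sends generators to paths and defining relations to equal paths induces
   a homomorphism of vertex groups, so everything reduces to two facts about each crossing:
   F(w_i) does not change where an arc passes over, and the Wirtinger relation holds.
   Conjugating by the over path to the top region T of the crossing (using that
   s^+ of the region below i is s^+ of the region above i followed by x_i^+, which is where
   independence of over paths enters), both become identities between loops at T in the
   groupoid generated by the eight letters x^+, x^- of the crossing, and each of them follows
   from the three relations at the crossing after inserting a cancelling pair of letters. *)

section \<open>Paths in a presented groupoid\<close>

lemma inv_word_Nil [simp]: "inv_word [] = []"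
  by (simp add: inv_word_def)

lemma inv_word_Cons [simp]: "inv_word ((g, d) # w) = inv_word w @ [(g, \<not> d)]"
  by (simp add: inv_word_def)

lemma inv_word_append [simp]: "inv_word (u @ v) = inv_word v @ inv_word u"
  by (simp add: inv_word_def)

lemma inv_word_inv_word [simp]: "inv_word (inv_word w) = w"
  by (simp add: inv_word_def rev_map comp_def case_prod_beta)

definition conj_word :: "'g word \<Rightarrow> 'g word \<Rightarrow> 'g word" where
  "conj_word w m = w @ m @ inv_word w"

lemma conj_word_append [simp]: "conj_word (u @ v) m = conj_word u (conj_word v m)"
  by (simp add: conj_word_def)

lemma inv_word_conj_word [simp]: "inv_word (conj_word w m) = conj_word w (inv_word m)"
  by (simp add: conj_word_def)

lemma is_path_append:
  "is_path s t G a (u @ v) b \<longleftrightarrow> (\<exists>m. is_path s t G a u m \<and> is_path s t G m v b)"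
  by (induction u arbitrary: a) (auto split: if_splits)

lemma is_path_appendI:
  "is_path s t G a u m \<Longrightarrow> is_path s t G m v b \<Longrightarrow> is_path s t G a (u @ v) b"
  by (auto simp: is_path_append)

lemma is_path_inv_word: "is_path s t G a w b \<Longrightarrow> is_path s t G b (inv_word w) a"
  by (induction w arbitrary: a) (auto simp: is_path_append split: if_splits)

lemma is_path_conj_word:
  "is_path s t G a w b \<Longrightarrow> is_path s t G b m b \<Longrightarrow> is_path s t G a (conj_word w m) a"
  by (auto simp: conj_word_def intro!: is_path_appendI is_path_inv_word)

declare path_eq.pe_trans [trans]

lemma path_eq_is_path:
  "path_eq s t G rels a b u v \<Longrightarrow> is_path s t G a u b \<and> is_path s t G a v b"
  by (induction rule: path_eq.induct) (auto simp: is_path_append split: if_splits)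

lemma path_eq_append_right:
  "path_eq s t G rels a m u u' \<Longrightarrow> is_path s t G m w b \<Longrightarrow>
     path_eq s t G rels a b (u @ w) (u' @ w)"
proof (induction rule: path_eq.induct)
  case (pe_refl a v m)
  then show ?case by (intro path_eq.pe_refl is_path_appendI)
next
  case (pe_cancel a u g d v m)
  then show ?case
    using path_eq.pe_cancel[of s t G a u g d "v @ w" b rels]
      is_path_appendI[OF pe_cancel.hyps pe_cancel.prems] by simp
next
  case (pe_rel l r a u v m)
  then show ?case
    using path_eq.pe_rel[of l r rels s t G a u "v @ w" b]
      is_path_appendI[OF pe_rel.hyps(2) pe_rel.prems]
      is_path_appendI[OF pe_rel.hyps(3) pe_rel.prems] by simp
qed (auto intro: path_eq.intros)

lemma path_eq_append_left:
  "path_eq s t G rels m b u u' \<Longrightarrow> is_path s t G a w m \<Longrightarrow>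
     path_eq s t G rels a b (w @ u) (w @ u')"
proof (induction rule: path_eq.induct)
  case (pe_refl m v b)
  then show ?case by (intro path_eq.pe_refl is_path_appendI)
next
  case (pe_cancel m u g d v b)
  then show ?case
    using path_eq.pe_cancel[of s t G a "w @ u" g d v b rels]
      is_path_appendI[OF pe_cancel.prems pe_cancel.hyps] by simp
next
  case (pe_rel l r m u v b)
  then show ?case
    using path_eq.pe_rel[of l r rels s t G a "w @ u" v b]
      is_path_appendI[OF pe_rel.prems pe_rel.hyps(2)]
      is_path_appendI[OF pe_rel.prems pe_rel.hyps(3)] by simp
qed (auto intro: path_eq.intros)

lemma path_eq_append:
  "path_eq s t G rels a m u u' \<Longrightarrow> path_eq s t G rels m b v v' \<Longrightarrow>
     path_eq s t G rels a b (u @ v) (u' @ v')"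
  by (meson path_eq.pe_trans path_eq_append_left path_eq_append_right path_eq_is_path)

lemma path_eq_of_rel:
  "(l, r) \<in> rels \<Longrightarrow> is_path s t G a l b \<Longrightarrow> is_path s t G a r b \<Longrightarrow>
     path_eq s t G rels a b l r"
  using path_eq.pe_rel[of l r rels s t G a "[]" "[]" b] by simp

lemma path_eq_append_inv_word:
  "is_path s t G a w b \<Longrightarrow> path_eq s t G rels a a (w @ inv_word w) []"
proof (induction w arbitrary: a)
  case Nil
  then show ?case by (simp add: path_eq.pe_refl)
next
  case (Cons x w)
  obtain g d where x: "x = (g, d)" by fastforce
  then obtain m where g: "is_path s t G a [(g, d)] m" and w: "is_path s t G m w b"
    using Cons.prems by (auto split: if_splits)
  have g_back: "is_path s t G m [(g, \<not> d)] a"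
    using g by (auto split: if_splits)
  have "path_eq s t G rels a a ([(g, d)] @ (w @ inv_word w) @ [(g, \<not> d)]) ([(g, d)] @ [] @ [(g, \<not> d)])"
    using Cons.IH[OF w] g_back g by (intro path_eq_append_left path_eq_append_right)
  also have "path_eq s t G rels a a \<dots> []"
    using path_eq.pe_cancel[of s t G a "[]" g d "[]" a rels] g g_back
    by (auto split: if_splits)
  finally show ?case using x by simp
qed

lemma path_eq_inv_word_append:
  "is_path s t G a w b \<Longrightarrow> path_eq s t G rels b b (inv_word w @ w) []"
  using path_eq_append_inv_word[OF is_path_inv_word] by fastforce

lemma path_eq_inv_word:
  assumes uv: "path_eq s t G rels a b u v"
  shows "path_eq s t G rels b a (inv_word u) (inv_word v)"
proof -
  have u: "is_path s t G a u b" and v: "is_path s t G a v b"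
    using path_eq_is_path[OF uv] by auto
  have iu: "is_path s t G b (inv_word u) a" and iv: "is_path s t G b (inv_word v) a"
    using u v by (auto intro: is_path_inv_word)
  have "path_eq s t G rels b a (inv_word u) (inv_word u @ v @ inv_word v)"
    using path_eq.pe_sym[OF path_eq_append_left[OF path_eq_append_inv_word[OF v] iu]] by simp
  also have "path_eq s t G rels b a \<dots> (inv_word u @ u @ inv_word v)"
    using path_eq.pe_sym[OF uv] iu iv by (intro path_eq_append_left path_eq_append_right)
  also have "path_eq s t G rels b a \<dots> ([] @ inv_word v)"
    using path_eq_append_right[OF path_eq_inv_word_append[OF u] iv] by simp
  finally show ?thesis by simp
qed

lemma path_eq_in_context:
  "path_eq s t G rels m m' l r \<Longrightarrow> is_path s t G a u m \<Longrightarrow> is_path s t G m' v b \<Longrightarrow>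
     path_eq s t G rels a b (u @ l @ v) (u @ r @ v)"
  by (intro path_eq_append_left path_eq_append_right)

lemma path_eq_conj_word:
  "path_eq s t G rels a b w w' \<Longrightarrow> path_eq s t G rels b b m m' \<Longrightarrow>
     path_eq s t G rels a a (conj_word w m) (conj_word w' m')"
  unfolding conj_word_def by (intro path_eq_append path_eq_inv_word)

lemma conj_word_conj_word_path_eq:
  assumes w: "is_path s t G a w b" and u: "is_path s t G b u b" and m: "is_path s t G b m b"
  shows "path_eq s t G rels a a (conj_word (conj_word w u) (conj_word w m)) (conj_word w (conj_word u m))"
proof -
  have cancel: "path_eq s t G rels b b (inv_word w @ w) []"
    by (rule path_eq_inv_word_append[OF w])
  have wu: "is_path s t G a (w @ u) b" and uw: "is_path s t G b (inv_word u @ inv_word w) a"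
    using w u by (auto intro: is_path_appendI is_path_inv_word)
  have "conj_word (conj_word w u) (conj_word w m)
      = (w @ u) @ (inv_word w @ w) @ (m @ (inv_word w @ w) @ (inv_word u @ inv_word w))"
    by (simp add: conj_word_def)
  also have "path_eq s t G rels a a \<dots> ((w @ u) @ [] @ (m @ (inv_word w @ w) @ (inv_word u @ inv_word w)))"
    by (intro path_eq_in_context[OF cancel wu] is_path_appendI[OF m]
        is_path_appendI[OF is_path_appendI[OF is_path_inv_word[OF w] w] uw])
  also have "path_eq s t G rels a a \<dots> ((w @ u) @ (m @ [] @ (inv_word u @ inv_word w)))"
    using path_eq_append_left[OF path_eq_in_context[OF cancel m uw] wu] by simp
  also have "\<dots> = conj_word w (conj_word u m)"
    by (simp add: conj_word_def)
  finally show ?thesis .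
qed

section \<open>Homomorphisms of vertex groups induced by substitution\<close>

lemma path_rel_Image_eq:
  "path_eq s t G rels a b u v \<Longrightarrow> path_rel s t G rels a b `` {u} = path_rel s t G rels a b `` {v}"
  unfolding path_rel_def by (blast intro: path_eq.pe_trans path_eq.pe_sym)

lemma path_eq_some_in_class:
  "is_path s t G a u b \<Longrightarrow> path_eq s t G rels a b u (SOME w. w \<in> path_rel s t G rels a b `` {u})"
  using someI[of "\<lambda>w. w \<in> path_rel s t G rels a b `` {u}" u]
  by (simp add: path_rel_def path_eq.pe_refl)

lemma quotient_path_rel_some:
  assumes "X \<in> {w. is_path s t G a w b} // path_rel s t G rels a b"
  shows "is_path s t G a (SOME w. w \<in> X) b \<and> X = path_rel s t G rels a b `` {SOME w. w \<in> X}"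
proof -
  obtain u where u: "is_path s t G a u b" and X: "X = path_rel s t G rels a b `` {u}"
    using assms by (auto elim: quotientE)
  have "path_eq s t G rels a b u (SOME w. w \<in> X)"
    unfolding X by (rule path_eq_some_in_class[OF u])
  then show ?thesis
    using X path_eq_is_path path_rel_Image_eq by metis
qed

definition subst_word :: "('g \<Rightarrow> 'h word) \<Rightarrow> 'g word \<Rightarrow> 'h word" where
  "subst_word f w = concat (map (\<lambda>(g, d). if d then f g else inv_word (f g)) w)"

lemma subst_word_simps [simp]:
  "subst_word f [] = []"
  "subst_word f ((g, d) # w) = (if d then f g else inv_word (f g)) @ subst_word f w"
  "subst_word f (u @ v) = subst_word f u @ subst_word f v"
  by (simp_all add: subst_word_def)

context
  fixes s :: "'g \<Rightarrow> 'o" and t :: "'g \<Rightarrow> 'o" and G :: "'g set"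
    and rels :: "('g word \<times> 'g word) set"
    and s' :: "'h \<Rightarrow> 'p" and t' :: "'h \<Rightarrow> 'p" and G' :: "'h set"
    and rels' :: "('h word \<times> 'h word) set"
    and obj :: "'o \<Rightarrow> 'p" and f :: "'g \<Rightarrow> 'h word"
  assumes gens_to_paths: "\<And>g. g \<in> G \<Longrightarrow> is_path s' t' G' (obj (s g)) (f g) (obj (t g))"
begin

lemma is_path_subst_word:
  "is_path s t G a w b \<Longrightarrow> is_path s' t' G' (obj a) (subst_word f w) (obj b)"
proof (induction w arbitrary: a)
  case (Cons x w)
  then show ?case
    by (cases x) (auto intro!: is_path_appendI is_path_inv_word gens_to_paths split: if_splits)
qed simp

lemma path_eq_subst_word:
  assumes rels_respected: "\<And>l r a b. (l, r) \<in> rels \<Longrightarrow> is_path s t G a l b \<Longrightarrow>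
      path_eq s' t' G' rels' (obj a) (obj b) (subst_word f l) (subst_word f r)"
  shows "path_eq s t G rels a b u v \<Longrightarrow>
    path_eq s' t' G' rels' (obj a) (obj b) (subst_word f u) (subst_word f v)"
proof (induction rule: path_eq.induct)
  case (pe_refl a w b)
  then show ?case by (intro path_eq.pe_refl is_path_subst_word)
next
  case (pe_cancel a u g d v b)
  then obtain m m' where u: "is_path s t G a u m" and g: "is_path s t G m [(g, d)] m'"
      and v: "is_path s t G m v b"
    by (auto simp: is_path_append split: if_splits)
  have "path_eq s' t' G' rels' (obj m) (obj m) (subst_word f [(g, d), (g, \<not> d)]) []"
    using path_eq_append_inv_word[OF is_path_subst_word[OF g]]
      path_eq_inv_word_append[OF is_path_subst_word[OF g]]
    by (cases d) simp_all
  from path_eq_in_context[OF this is_path_subst_word[OF u] is_path_subst_word[OF v]]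
  show ?case by simp
next
  case (pe_rel l r a u v b)
  then obtain m m' where u: "is_path s t G a u m" and l: "is_path s t G m l m'"
      and v: "is_path s t G m' v b"
    by (auto simp: is_path_append)
  show ?case
    using path_eq_in_context[OF rels_respected[OF pe_rel.hyps(1) l]
        is_path_subst_word[OF u] is_path_subst_word[OF v]] by simp
qed (auto intro: path_eq.intros)

lemma vertex_group_hom_subst_word:
  assumes rels_respected: "\<And>l r a b. (l, r) \<in> rels \<Longrightarrow> is_path s t G a l b \<Longrightarrow>
      path_eq s' t' G' rels' (obj a) (obj b) (subst_word f l) (subst_word f r)"
  obtains \<phi> where "\<phi> \<in> hom (vertex_group s t G rels a) (vertex_group s' t' G' rels' (obj a))"
    and "\<And>u. is_path s t G a u a \<Longrightarrow>
      \<phi> (path_rel s t G rels a a `` {u}) = path_rel s' t' G' rels' (obj a) (obj a) `` {subst_word f u}"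
proof
  let ?cls = "\<lambda>u. path_rel s t G rels a a `` {u}"
  let ?cls' = "\<lambda>u. path_rel s' t' G' rels' (obj a) (obj a) `` {u}"
  define \<phi> where "\<phi> X = ?cls' (subst_word f (SOME w. w \<in> X))" for X
  show \<phi>_cls: "\<phi> (?cls u) = ?cls' (subst_word f u)" if u: "is_path s t G a u a" for u
    unfolding \<phi>_def
    by (rule path_rel_Image_eq, rule path_eq.pe_sym)
      (rule path_eq_subst_word[OF rels_respected path_eq_some_in_class[OF u]])
  show "\<phi> \<in> hom (vertex_group s t G rels a) (vertex_group s' t' G' rels' (obj a))"
  proof (rule homI)
    fix X assume "X \<in> carrier (vertex_group s t G rels a)"
    then have "is_path s t G a (SOME w. w \<in> X) a"
      by (simp add: vertex_group_def quotient_path_rel_some)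
    then show "\<phi> X \<in> carrier (vertex_group s' t' G' rels' (obj a))"
      unfolding \<phi>_def vertex_group_def by (auto intro: quotientI is_path_subst_word)
  next
    fix X Y
    assume "X \<in> carrier (vertex_group s t G rels a)" "Y \<in> carrier (vertex_group s t G rels a)"
    then obtain x y where x: "is_path s t G a x a" "X = ?cls x" and y: "is_path s t G a y a" "Y = ?cls y"
      by (auto simp: vertex_group_def dest: quotient_path_rel_some)
    have "X \<otimes>\<^bsub>vertex_group s t G rels a\<^esub> Y = ?cls ((SOME w. w \<in> X) @ (SOME w. w \<in> Y))"
      by (simp add: vertex_group_def)
    also have "\<dots> = ?cls (x @ y)"
      unfolding x(2) y(2)
      by (rule path_rel_Image_eq[OF path_eq.pe_sym[OF path_eq_append[OF
            path_eq_some_in_class[OF x(1)] path_eq_some_in_class[OF y(1)]]]])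
    finally have "\<phi> (X \<otimes>\<^bsub>vertex_group s t G rels a\<^esub> Y)
        = ?cls' (subst_word f x @ subst_word f y)"
      using \<phi>_cls[OF is_path_appendI[OF x(1) y(1)]] by simp
    also have "\<dots> = ?cls' ((SOME w. w \<in> \<phi> X) @ (SOME w. w \<in> \<phi> Y))"
      unfolding \<phi>_cls[OF x(1), folded x(2)] \<phi>_cls[OF y(1), folded y(2)]
      by (rule path_rel_Image_eq[OF path_eq_append[OF path_eq_some_in_class path_eq_some_in_class]])
        (use x(1) y(1) is_path_subst_word in auto)
    finally show "\<phi> (X \<otimes>\<^bsub>vertex_group s t G rels a\<^esub> Y)
        = \<phi> X \<otimes>\<^bsub>vertex_group s' t' G' rels' (obj a)\<^esub> \<phi> Y"
      by (simp add: vertex_group_def)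
  qed
qed

end

section \<open>The relations at a crossing\<close>

definition meridian :: "'g \<Rightarrow> 'g \<Rightarrow> 'g word" where
  "meridian p m = [(p, True), (m, False)]"

(* p and m are the over and under generators x^+, x^- of the segments 1, 2, 1', 2' of a crossing;
   T, L, B, R are the regions above, left of, below and right of it. *)
locale crossing_square =
  fixes s :: "'g \<Rightarrow> 'o" and t :: "'g \<Rightarrow> 'o" and G :: "'g set"
    and rels :: "('g word \<times> 'g word) set"
    and p1 m1 p2 m2 p1' m1' p2' m2' :: 'g and T L B R :: 'o
  assumes generators:
      "p1 \<in> G" "m1 \<in> G" "p2 \<in> G" "m2 \<in> G" "p1' \<in> G" "m1' \<in> G" "p2' \<in> G" "m2' \<in> G"
    and ends:
      "s p1 = T" "t p1 = L" "s m1 = T" "t m1 = L" "s p2 = L" "t p2 = B" "s m2 = L" "t m2 = B"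
      "s p1' = R" "t p1' = B" "s m1' = R" "t m1' = B" "s p2' = T" "t p2' = R" "s m2' = T" "t m2' = R"
    and over_rel: "([(p1, True), (p2, True)], [(p2', True), (p1', True)]) \<in> rels"
    and under_rel: "([(m1, True), (m2, True)], [(m2', True), (m1', True)]) \<in> rels"
begin

lemma over_relation: "path_eq s t G rels T B [(p1, True), (p2, True)] [(p2', True), (p1', True)]"
  by (rule path_eq_of_rel[OF over_rel]) (simp_all add: generators ends)

lemma under_relation: "path_eq s t G rels T B [(m1, True), (m2, True)] [(m2', True), (m1', True)]"
  by (rule path_eq_of_rel[OF under_rel]) (simp_all add: generators ends)

lemma is_path_incoming_meridians:
  "is_path s t G T (meridian p1 m1) T"
  "is_path s t G T (conj_word [(p1, True)] (meridian p2 m2)) T"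
  by (simp_all add: meridian_def conj_word_def generators ends)

end

locale positive_crossing_square = crossing_square +
  assumes mixed_rel: "([(m1, True), (p2, True)], [(p2', True), (m1', True)]) \<in> rels"
begin

lemma mixed_relation: "path_eq s t G rels T B [(m1, True), (p2, True)] [(p2', True), (m1', True)]"
  by (rule path_eq_of_rel[OF mixed_rel]) (simp_all add: generators ends)

lemma meridian_over_continues:
  "path_eq s t G rels T T (meridian p1 m1) (conj_word [(p2', True)] (meridian p1' m1'))"
proof -
  have "path_eq s t G rels T T (meridian p1 m1) [(p1, True), (p2, True), (p2, False), (m1, False)]"
    using path_eq.pe_cancel[of s t G T "[(p1, True)]" p2 True "[(m1, False)]" T rels,
        THEN path_eq.pe_sym]
    by (simp add: meridian_def generators ends)
  also have "path_eq s t G rels T T \<dots> [(p2', True), (p1', True), (m1', False), (p2', False)]"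
    using path_eq_append[OF over_relation path_eq_inv_word[OF mixed_relation]] by simp
  also have "\<dots> = conj_word [(p2', True)] (meridian p1' m1')"
    by (simp add: conj_word_def meridian_def)
  finally show ?thesis .
qed

lemma meridian_under_conjugated:
  "path_eq s t G rels T T (meridian p2' m2')
     (conj_word (inv_word (meridian p1 m1)) (conj_word [(p1, True)] (meridian p2 m2)))"
proof -
  have "path_eq s t G rels T T (meridian p2' m2') [(p2', True), (m1', True), (m1', False), (m2', False)]"
    using path_eq.pe_cancel[of s t G T "[(p2', True)]" m1' True "[(m2', False)]" T rels,
        THEN path_eq.pe_sym]
    by (simp add: meridian_def generators ends)
  also have "path_eq s t G rels T T \<dots> [(m1, True), (p2, True), (m2, False), (m1, False)]"
    using path_eq_append[OF path_eq.pe_sym[OF mixed_relation]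
        path_eq_inv_word[OF path_eq.pe_sym[OF under_relation]]] by simp
  also have "path_eq s t G rels T T \<dots>
      [(m1, True), (p1, False), (p1, True), (p2, True), (m2, False), (m1, False)]"
    using path_eq.pe_cancel[of s t G T "[(m1, True)]" p1 False
        "[(p2, True), (m2, False), (m1, False)]" T rels, THEN path_eq.pe_sym]
    by (simp add: generators ends)
  also have "path_eq s t G rels T T \<dots>
      [(m1, True), (p1, False), (p1, True), (p2, True), (m2, False), (p1, False), (p1, True), (m1, False)]"
    using path_eq.pe_cancel[of s t G T "[(m1, True), (p1, False), (p1, True), (p2, True), (m2, False)]"
        p1 False "[(m1, False)]" T rels, THEN path_eq.pe_sym]
    by (simp add: generators ends)
  also have "\<dots> = conj_word (inv_word (meridian p1 m1)) (conj_word [(p1, True)] (meridian p2 m2))"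
    by (simp add: conj_word_def meridian_def)
  finally show ?thesis .
qed

end

locale negative_crossing_square = crossing_square +
  assumes mixed_rel: "([(p1, True), (m2, True)], [(m2', True), (p1', True)]) \<in> rels"
begin

lemma mixed_relation: "path_eq s t G rels T B [(p1, True), (m2, True)] [(m2', True), (p1', True)]"
  by (rule path_eq_of_rel[OF mixed_rel]) (simp_all add: generators ends)

lemma meridian_over_continues:
  "path_eq s t G rels T T (conj_word [(p1, True)] (meridian p2 m2)) (meridian p2' m2')"
proof -
  have "conj_word [(p1, True)] (meridian p2 m2) = [(p1, True), (p2, True)] @ inv_word [(p1, True), (m2, True)]"
    by (simp add: conj_word_def meridian_def)
  also have "path_eq s t G rels T T \<dots> ([(p2', True), (p1', True)] @ inv_word [(m2', True), (p1', True)])"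
    by (rule path_eq_append[OF over_relation path_eq_inv_word[OF mixed_relation]])
  also have "path_eq s t G rels T T \<dots> (meridian p2' m2')"
    using path_eq.pe_cancel[of s t G T "[(p2', True)]" p1' True "[(m2', False)]" T rels]
    by (simp add: meridian_def generators ends)
  finally show ?thesis .
qed

lemma meridian_under_conjugated:
  "path_eq s t G rels T T (conj_word [(p2', True)] (meridian p1' m1'))
     (conj_word (conj_word [(p1, True)] (meridian p2 m2)) (meridian p1 m1))"
proof -
  have "path_eq s t G rels T T (conj_word [(p2', True)] (meridian p1' m1'))
      [(p2', True), (m2', False), (m2', True), (p1', True), (m1', False), (p2', False)]"
    using path_eq.pe_cancel[of s t G T "[(p2', True)]" m2' False
        "[(p1', True), (m1', False), (p2', False)]" T rels, THEN path_eq.pe_sym]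
    by (simp add: conj_word_def meridian_def generators ends)
  also have "path_eq s t G rels T T \<dots>
      [(p2', True), (m2', False), (m2', True), (p1', True), (m1', False), (m2', False), (m2', True), (p2', False)]"
    using path_eq.pe_cancel[of s t G T "[(p2', True), (m2', False), (m2', True), (p1', True), (m1', False)]"
        m2' False "[(p2', False)]" T rels, THEN path_eq.pe_sym]
    by (simp add: generators ends)
  also have "path_eq s t G rels T T \<dots>
      [(p2', True), (m2', False), (p1, True), (m2, True), (m2, False), (m1, False), (m2', True), (p2', False)]"
    using path_eq_in_context[OF path_eq_append[OF path_eq.pe_sym[OF mixed_relation]
          path_eq_inv_word[OF path_eq.pe_sym[OF under_relation]]],
        where a = T and u = "[(p2', True), (m2', False)]" and v = "[(m2', True), (p2', False)]" and b = T]
    by (simp add: generators ends)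
  also have "path_eq s t G rels T T \<dots> (conj_word (meridian p2' m2') (meridian p1 m1))"
    using path_eq.pe_cancel[of s t G T "[(p2', True), (m2', False), (p1, True)]" m2 True
        "[(m1, False), (m2', True), (p2', False)]" T rels]
    by (simp add: conj_word_def meridian_def generators ends)
  also have "path_eq s t G rels T T \<dots> (conj_word (conj_word [(p1, True)] (meridian p2 m2)) (meridian p1 m1))"
    by (rule path_eq_conj_word[OF path_eq.pe_sym[OF meridian_over_continues] path_eq.pe_refl])
      (simp add: meridian_def generators ends)
  finally show ?thesis .
qed

end

section \<open>Tangle diagrams and over paths\<close>

abbreviation Pi_path ::
    "('s, 'r, 'c) tangle_diagram \<Rightarrow> 'r \<Rightarrow> ('s \<times> bool) word \<Rightarrow> 'r \<Rightarrow> bool" where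
  "Pi_path D \<equiv> is_path (Pi_src D) (Pi_tgt D) (Pi_gens D)"

lemma F_word_conj_word:
  "F_word D i = conj_word (s_plus D (above D i)) (meridian (i, True) (i, False))"
  by (simp add: F_word_def conj_word_def meridian_def)

lemma crossing_regions:
  assumes "wf_diagram D" and "c \<in> crossings D"
  shows "in1 D c \<in> segs D" "in2 D c \<in> segs D" "out1 D c \<in> segs D" "out2 D c \<in> segs D"
    and "above D (in2 D c) = below D (in1 D c)" "below D (out1 D c) = below D (in2 D c)"
    and "above D (out2 D c) = above D (in1 D c)" "below D (out2 D c) = above D (out1 D c)"
  using assms by (auto simp: wf_diagram_def)

lemma crossing_square_at:
  assumes "wf_diagram D" and "c \<in> crossings D"
  shows "crossing_square (Pi_src D) (Pi_tgt D) (Pi_gens D) (Pi_rels D)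
    (in1 D c, True) (in1 D c, False) (in2 D c, True) (in2 D c, False)
    (out1 D c, True) (out1 D c, False) (out2 D c, True) (out2 D c, False)
    (above D (in1 D c)) (below D (in1 D c)) (below D (in2 D c)) (above D (out1 D c))"
  using crossing_regions[OF assms] assms(2)
  by unfold_locales (auto simp: Pi_gens_def Pi_rels_def)

lemma positive_crossing_square_at:
  assumes "wf_diagram D" and "c \<in> crossings D" and "positive D c"
  shows "positive_crossing_square (Pi_src D) (Pi_tgt D) (Pi_gens D) (Pi_rels D)
    (in1 D c, True) (in1 D c, False) (in2 D c, True) (in2 D c, False)
    (out1 D c, True) (out1 D c, False) (out2 D c, True) (out2 D c, False)
    (above D (in1 D c)) (below D (in1 D c)) (below D (in2 D c)) (above D (out1 D c))"
  using crossing_square_at[OF assms(1,2)] assms(2,3)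
  by (intro positive_crossing_square.intro positive_crossing_square_axioms.intro)
    (auto simp: Pi_rels_def)

lemma negative_crossing_square_at:
  assumes "wf_diagram D" and "c \<in> crossings D" and "\<not> positive D c"
  shows "negative_crossing_square (Pi_src D) (Pi_tgt D) (Pi_gens D) (Pi_rels D)
    (in1 D c, True) (in1 D c, False) (in2 D c, True) (in2 D c, False)
    (out1 D c, True) (out1 D c, False) (out2 D c, True) (out2 D c, False)
    (above D (in1 D c)) (below D (in1 D c)) (below D (in2 D c)) (above D (out1 D c))"
  using crossing_square_at[OF assms(1,2)] assms(2,3)
  by (intro negative_crossing_square.intro negative_crossing_square_axioms.intro)
    (auto simp: Pi_rels_def)

lemma arc_rel_segs:
  assumes "wf_diagram D" and "(i, j) \<in> arc_rel D" and "i \<in> segs D"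
  shows "j \<in> segs D"
  using assms(2,3) unfolding arc_rel_def
proof (induction rule: rtrancl_induct)
  case (step j k)
  then show ?case using assms(1) by (auto simp: over_joins_def wf_diagram_def)
qed

definition F_arc :: "('s, 'r, 'c) tangle_diagram \<Rightarrow> 's set \<Rightarrow> ('s \<times> bool) word" where
  "F_arc D A = F_word D (SOME i. i \<in> A)"

locale diagram_with_over_paths =
  fixes D :: "('s, 'r, 'c) tangle_diagram"
  assumes wf: "wf_diagram D"
    and over_paths_exist: "\<forall>j \<in> regs D. over_words D j \<noteq> {}"
    and over_paths_indep: "\<forall>j \<in> regs D. \<forall>u \<in> over_words D j. \<forall>v \<in> over_words D j.
                              Pi_eq D (top_region D) j u v"
begin

lemma seg_regions: "i \<in> segs D \<Longrightarrow> above D i \<in> regs D \<and> below D i \<in> regs D"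
  using wf by (simp add: wf_diagram_def)

lemma s_plus_over_words: "j \<in> regs D \<Longrightarrow> s_plus D j \<in> over_words D j"
  unfolding s_plus_def using over_paths_exist by (simp add: some_in_eq)

lemma is_path_s_plus_above:
  "i \<in> segs D \<Longrightarrow> Pi_path D (top_region D) (s_plus D (above D i)) (above D i)"
  using s_plus_over_words seg_regions by (simp add: over_words_def)

lemma s_plus_below:
  assumes i: "i \<in> segs D"
  shows "Pi_eq D (top_region D) (below D i) (s_plus D (below D i)) (s_plus D (above D i) @ [((i, True), True)])"
proof -
  have "s_plus D (above D i) @ [((i, True), True)] \<in> over_words D (below D i)"
    using s_plus_over_words[of "above D i"] seg_regions[OF i] i
    by (auto simp: over_words_def Pi_gens_def intro!: is_path_appendI)
  then show ?thesis
    using over_paths_indep s_plus_over_words seg_regions[OF i] by blast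
qed

lemma is_path_F_word: "i \<in> segs D \<Longrightarrow> Pi_path D (top_region D) (F_word D i) (top_region D)"
  unfolding F_word_conj_word using is_path_s_plus_above[of i]
  by (intro is_path_conj_word) (auto simp: meridian_def Pi_gens_def)

lemma F_word_across:
  assumes i: "i \<in> segs D" and j: "j \<in> segs D" and "above D j = below D i"
  shows "Pi_eq D (top_region D) (top_region D) (F_word D j)
    (conj_word (s_plus D (above D i)) (conj_word [((i, True), True)] (meridian (j, True) (j, False))))"
proof -
  have "Pi_eq D (top_region D) (top_region D) (F_word D j)
      (conj_word (s_plus D (above D i) @ [((i, True), True)]) (meridian (j, True) (j, False)))"
    unfolding F_word_conj_word \<open>above D j = below D i\<close>
    using j \<open>above D j = below D i\<close>
    by (intro path_eq_conj_word[OF s_plus_below[OF i] path_eq.pe_refl])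
      (simp add: meridian_def Pi_gens_def)
  then show ?thesis by simp
qed

lemma F_word_at_crossing:
  assumes c: "c \<in> crossings D"
  shows "F_word D (in1 D c)
      = conj_word (s_plus D (above D (in1 D c))) (meridian (in1 D c, True) (in1 D c, False))"
    and "Pi_eq D (top_region D) (top_region D) (F_word D (in2 D c))
      (conj_word (s_plus D (above D (in1 D c)))
        (conj_word [((in1 D c, True), True)] (meridian (in2 D c, True) (in2 D c, False))))"
    and "F_word D (out2 D c)
      = conj_word (s_plus D (above D (in1 D c))) (meridian (out2 D c, True) (out2 D c, False))"
    and "Pi_eq D (top_region D) (top_region D) (F_word D (out1 D c))
      (conj_word (s_plus D (above D (in1 D c)))
        (conj_word [((out2 D c, True), True)] (meridian (out1 D c, True) (out1 D c, False))))"
  using F_word_across[of "in1 D c" "in2 D c"] F_word_across[of "out2 D c" "out1 D c"]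
    crossing_regions[OF wf c]
  by (simp_all add: F_word_conj_word)

lemma F_word_over_join:
  assumes "(i, j) \<in> over_joins D"
  shows "Pi_eq D (top_region D) (top_region D) (F_word D i) (F_word D j)"
proof -
  from assms consider
      (pos) c where "c \<in> crossings D" "positive D c" "i = in1 D c" "j = out1 D c"
    | (neg) c where "c \<in> crossings D" "\<not> positive D c" "i = in2 D c" "j = out2 D c"
    unfolding over_joins_def by blast
  then show ?thesis
  proof cases
    case pos
    note sT = is_path_s_plus_above[OF crossing_regions(1)[OF wf pos(1)]]
    have "Pi_eq D (top_region D) (top_region D) (F_word D i)
        (conj_word (s_plus D (above D (in1 D c)))
          (conj_word [((out2 D c, True), True)] (meridian (out1 D c, True) (out1 D c, False))))"
      unfolding pos F_word_at_crossing(1)[OF pos(1)]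
      by (rule path_eq_conj_word[OF path_eq.pe_refl[OF sT] positive_crossing_square.meridian_over_continues[OF
              positive_crossing_square_at[OF wf pos(1,2)]]])
    then show ?thesis
      unfolding pos by (rule path_eq.pe_trans[OF _ path_eq.pe_sym[OF F_word_at_crossing(4)[OF pos(1)]]])
  next
    case neg
    note sT = is_path_s_plus_above[OF crossing_regions(1)[OF wf neg(1)]]
    have "Pi_eq D (top_region D) (top_region D)
        (conj_word (s_plus D (above D (in1 D c)))
          (conj_word [((in1 D c, True), True)] (meridian (in2 D c, True) (in2 D c, False))))
        (F_word D j)"
      unfolding neg F_word_at_crossing(3)[OF neg(1)]
      by (rule path_eq_conj_word[OF path_eq.pe_refl[OF sT] negative_crossing_square.meridian_over_continues[OF
              negative_crossing_square_at[OF wf neg(1,2)]]])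
    then show ?thesis
      unfolding neg by (rule path_eq.pe_trans[OF F_word_at_crossing(2)[OF neg(1)]])
  qed
qed

lemma F_word_wirtinger_positive:
  assumes c: "c \<in> crossings D" and pos: "positive D c"
  shows "Pi_eq D (top_region D) (top_region D) (F_word D (out2 D c))
    (conj_word (inv_word (F_word D (in1 D c))) (F_word D (in2 D c)))"
proof -
  let ?sT = "s_plus D (above D (in1 D c))"
  let ?\<mu>1 = "meridian (in1 D c, True) (in1 D c, False)"
  let ?\<nu>2 = "conj_word [((in1 D c, True), True)] (meridian (in2 D c, True) (in2 D c, False))"
  note sT = is_path_s_plus_above[OF crossing_regions(1)[OF wf c]]
  note loops = crossing_square.is_path_incoming_meridians[OF crossing_square_at[OF wf c]]
  have "Pi_eq D (top_region D) (top_region D) (F_word D (out2 D c))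
      (conj_word ?sT (conj_word (inv_word ?\<mu>1) ?\<nu>2))"
    unfolding F_word_at_crossing(3)[OF c]
    by (rule path_eq_conj_word[OF path_eq.pe_refl[OF sT] positive_crossing_square.meridian_under_conjugated[OF
            positive_crossing_square_at[OF wf c pos]]])
  also have "Pi_eq D (top_region D) (top_region D) \<dots>
      (conj_word (conj_word ?sT (inv_word ?\<mu>1)) (conj_word ?sT ?\<nu>2))"
    by (rule path_eq.pe_sym[OF conj_word_conj_word_path_eq[OF sT is_path_inv_word[OF loops(1)] loops(2)]])
  also have "Pi_eq D (top_region D) (top_region D) \<dots>
      (conj_word (inv_word (F_word D (in1 D c))) (F_word D (in2 D c)))"
    unfolding F_word_at_crossing(1)[OF c] inv_word_conj_word
    by (rule path_eq_conj_word[OF path_eq.pe_refl path_eq.pe_sym[OF F_word_at_crossing(2)[OF c]]])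
      (rule is_path_conj_word[OF sT is_path_inv_word[OF loops(1)]])
  finally show ?thesis .
qed

lemma F_word_wirtinger_negative:
  assumes c: "c \<in> crossings D" and neg: "\<not> positive D c"
  shows "Pi_eq D (top_region D) (top_region D) (F_word D (out1 D c))
    (conj_word (F_word D (in2 D c)) (F_word D (in1 D c)))"
proof -
  let ?sT = "s_plus D (above D (in1 D c))"
  let ?\<mu>1 = "meridian (in1 D c, True) (in1 D c, False)"
  let ?\<nu>2 = "conj_word [((in1 D c, True), True)] (meridian (in2 D c, True) (in2 D c, False))"
  note sT = is_path_s_plus_above[OF crossing_regions(1)[OF wf c]]
  note loops = crossing_square.is_path_incoming_meridians[OF crossing_square_at[OF wf c]]
  have "Pi_eq D (top_region D) (top_region D) (F_word D (out1 D c))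
      (conj_word ?sT (conj_word [((out2 D c, True), True)] (meridian (out1 D c, True) (out1 D c, False))))"
    by (rule F_word_at_crossing(4)[OF c])
  also have "Pi_eq D (top_region D) (top_region D) \<dots> (conj_word ?sT (conj_word ?\<nu>2 ?\<mu>1))"
    by (rule path_eq_conj_word[OF path_eq.pe_refl[OF sT] negative_crossing_square.meridian_under_conjugated[OF
            negative_crossing_square_at[OF wf c neg]]])
  also have "Pi_eq D (top_region D) (top_region D) \<dots>
      (conj_word (conj_word ?sT ?\<nu>2) (conj_word ?sT ?\<mu>1))"
    by (rule path_eq.pe_sym[OF conj_word_conj_word_path_eq[OF sT loops(2) loops(1)]])
  also have "Pi_eq D (top_region D) (top_region D) \<dots> (conj_word (F_word D (in2 D c)) (F_word D (in1 D c)))"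
    unfolding F_word_at_crossing(1)[OF c]
    by (rule path_eq_conj_word[OF path_eq.pe_sym[OF F_word_at_crossing(2)[OF c]] path_eq.pe_refl])
      (rule is_path_conj_word[OF sT loops(1)])
  finally show ?thesis .
qed

lemma F_word_arc_rel:
  assumes "(i, j) \<in> arc_rel D" and "i \<in> segs D"
  shows "Pi_eq D (top_region D) (top_region D) (F_word D i) (F_word D j)"
  using assms unfolding arc_rel_def
proof (induction rule: rtrancl_induct)
  case base
  then show ?case by (rule path_eq.pe_refl[OF is_path_F_word])
next
  case (step j k)
  have "j \<in> segs D"
    using arc_rel_segs[OF wf _ step.prems] step.hyps(1) by (simp add: arc_rel_def)
  from step.hyps(2) have "Pi_eq D (top_region D) (top_region D) (F_word D j) (F_word D k)"
    using F_word_over_join path_eq.pe_sym[OF F_word_over_join] path_eq.pe_refl[OF is_path_F_word]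
    by auto
  with step.IH[OF step.prems] show ?case by (rule path_eq.pe_trans)
qed

lemma F_arc_arc_of:
  assumes i: "i \<in> segs D"
  shows "Pi_eq D (top_region D) (top_region D) (F_arc D (arc_of D i)) (F_word D i)"
proof -
  have "(SOME j. j \<in> arc_of D i) \<in> arc_of D i"
    by (rule someI[of _ i]) (simp add: arc_of_def arc_rel_def i)
  then show ?thesis
    unfolding F_arc_def arc_of_def
    by (intro path_eq.pe_sym[OF F_word_arc_rel[OF _ i]]) simp
qed

lemma is_path_F_arc:
  assumes "A \<in> arcs D"
  shows "Pi_path D (top_region D) (F_arc D A) (top_region D)"
proof -
  obtain i where i: "i \<in> segs D" and A: "A = arc_of D i"
    using assms by (auto simp: arcs_def arc_of_def elim: quotientE)
  show ?thesis
    unfolding A using path_eq_is_path[OF F_arc_arc_of[OF i]] by blast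
qed

lemma F_arc_wirt_rels:
  assumes "(l, r) \<in> wirt_rels D"
  shows "Pi_eq D (top_region D) (top_region D) (subst_word (F_arc D) l) (subst_word (F_arc D) r)"
proof -
  from assms consider
      (pos) c where "c \<in> crossings D" "positive D c" "l = [(arc_of D (out2 D c), True)]"
        "r = [(arc_of D (in1 D c), False), (arc_of D (in2 D c), True), (arc_of D (in1 D c), True)]"
    | (neg) c where "c \<in> crossings D" "\<not> positive D c" "l = [(arc_of D (out1 D c), True)]"
        "r = [(arc_of D (in2 D c), True), (arc_of D (in1 D c), True), (arc_of D (in2 D c), False)]"
    unfolding wirt_rels_def by blast
  then show ?thesis
  proof cases
    case pos
    note segs = crossing_regions(1-4)[OF wf pos(1)]
    note arcs = F_arc_arc_of[OF segs(1)] F_arc_arc_of[OF segs(2)] F_arc_arc_of[OF segs(3)]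
      F_arc_arc_of[OF segs(4)]
    have "Pi_eq D (top_region D) (top_region D) (subst_word (F_arc D) l) (F_word D (out2 D c))"
      using arcs(4) by (simp add: pos)
    also have "Pi_eq D (top_region D) (top_region D) \<dots>
        (conj_word (inv_word (F_word D (in1 D c))) (F_word D (in2 D c)))"
      by (rule F_word_wirtinger_positive[OF pos(1,2)])
    also have "Pi_eq D (top_region D) (top_region D) \<dots> (subst_word (F_arc D) r)"
      using path_eq.pe_sym[OF path_eq_append[OF path_eq_inv_word[OF arcs(1)]
            path_eq_append[OF arcs(2) arcs(1)]]]
      by (simp add: pos conj_word_def)
    finally show ?thesis .
  next
    case neg
    note segs = crossing_regions(1-4)[OF wf neg(1)]
    note arcs = F_arc_arc_of[OF segs(1)] F_arc_arc_of[OF segs(2)] F_arc_arc_of[OF segs(3)]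
      F_arc_arc_of[OF segs(4)]
    have "Pi_eq D (top_region D) (top_region D) (subst_word (F_arc D) l) (F_word D (out1 D c))"
      using arcs(3) by (simp add: neg)
    also have "Pi_eq D (top_region D) (top_region D) \<dots>
        (conj_word (F_word D (in2 D c)) (F_word D (in1 D c)))"
      by (rule F_word_wirtinger_negative[OF neg(1,2)])
    also have "Pi_eq D (top_region D) (top_region D) \<dots> (subst_word (F_arc D) r)"
      using path_eq.pe_sym[OF path_eq_append[OF arcs(2)
            path_eq_append[OF arcs(1) path_eq_inv_word[OF arcs(2)]]]]
      by (simp add: neg conj_word_def)
    finally show ?thesis .
  qed
qed

end

theorem theorem3p5:
  fixes D :: "('s, 'r, 'c) tangle_diagram"
  assumes wf: "wf_diagram D"
    and over_paths_exist: "\<forall>j \<in> regs D. over_words D j \<noteq> {}"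
    and over_paths_indep: "\<forall>j \<in> regs D. \<forall>u \<in> over_words D j. \<forall>v \<in> over_words D j.
                              Pi_eq D (top_region D) j u v"
  shows "\<exists>\<phi>. \<phi> \<in> hom (wirtinger_group D) (Aut_top D) \<and>
             (\<forall>i \<in> segs D. \<phi> (wirt_gen D i) = F_val D i)"
proof -
  interpret diagram_with_over_paths D
    using assms by unfold_locales
  obtain \<phi> where hom: "\<phi> \<in> hom (wirtinger_group D) (Aut_top D)"
    and on_classes: "\<And>u. is_path (\<lambda>_. ()) (\<lambda>_. ()) (arcs D) () u () \<Longrightarrow>
      \<phi> (path_rel (\<lambda>_. ()) (\<lambda>_. ()) (arcs D) (wirt_rels D) () () `` {u})
        = path_rel (Pi_src D) (Pi_tgt D) (Pi_gens D) (Pi_rels D) (top_region D) (top_region D)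
            `` {subst_word (F_arc D) u}"
    unfolding wirtinger_group_def Aut_top_def
    by (rule vertex_group_hom_subst_word[where s = "\<lambda>_. ()" and t = "\<lambda>_. ()" and G = "arcs D"
          and rels = "wirt_rels D" and s' = "Pi_src D" and t' = "Pi_tgt D" and G' = "Pi_gens D"
          and rels' = "Pi_rels D" and obj = "\<lambda>_. top_region D" and f = "F_arc D" and a = "()"])
      (auto intro: is_path_F_arc F_arc_wirt_rels)
  have "\<phi> (wirt_gen D i) = F_val D i" if i: "i \<in> segs D" for i
  proof -
    have "arc_of D i \<in> arcs D"
      unfolding arcs_def arc_of_def using i by (rule quotientI)
    then have "\<phi> (wirt_gen D i) = path_rel (Pi_src D) (Pi_tgt D) (Pi_gens D) (Pi_rels D)
        (top_region D) (top_region D) `` {F_arc D (arc_of D i)}"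
      by (simp add: wirt_gen_def on_classes)
    also have "\<dots> = F_val D i"
      unfolding F_val_def by (rule path_rel_Image_eq[OF F_arc_arc_of[OF i]])
    finally show ?thesis .
  qed
  with hom show ?thesis by blast
qed

end
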